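(* Consider online multiclass classification with an arbitrary feedback graph and let $\kappa=\tfrac12$. For each round $t$ let $\ell_t$ be the multiclass hinge loss defined below and $a(\mathbf{W}_t,\mathbf{x}_t)=\ell^{(t)}(\mathbf{W}_t,y_t^\star)$. Then Gappletron (with any $\gamma\ge0$ and any OCO algorithm) satisfies for every $t$ $$\sum_{y\in[K]}p_t'(y)\mathbb{1}[y\ne y_t]\le\max\Big\{\frac23,\frac{K-1}{K}\Big\}\ell_t(\mathbf{W}_t)+\gamma_t.$$ Furthermore, $\ell_t$ satisfies $\|\nabla\ell_t(\mathbf{W}_t)\|_2^2\le4\|\mathbf{x}_t\|_2^2\,\ell_t(\mathbf{W}_t)$.
   Context: Setting: for $t=1,\dots,T$ an oblivious adversary fixes $\mathbf{x}_t\in\mathbb{R}^d$ and $y_t\in[K]$; the learner predicts $y_t'\in[K]$. A feedback graph is a directed graph $([K],\mathcal{E})$ where every node has an incoming edge; $\mathrm{out}(y')=\{y:(y',y)\in\mathcal{E}\}$; predicting $y_t'$ reveals $(y,\mathbb{1}[y\ne y_t])$ for $y\in\mathrm{out}(y_t')$ (a node with $K-1$ outgoing edges gets the missing edge added). $\mathcal{Q}=\{y':\mathrm{out}(y')=[K]\}$; $S$ is a minimum dominating set (every $y$ lies in $\mathrm{out}(y')$ for some $y'\in S$), $\rho=|S|$. Gappletron (inputs $\mathcal{Q}$, $S$, OCO algorithm $\mathcal{A}$ over matrices $\mathbf{W}\in\mathbb{R}^{K\times d}$ with rows $\mathbf{W}^k$, $\gamma\ge0$, gap map $a$ into $[0,1]$):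 at round $t$: $y_t^\star=\arg\max_k\langle\mathbf{W}_t^k,\mathbf{x}_t\rangle$; $\gamma_t=0$ if $y_t^\star\in\mathcal{Q}$, else $\gamma_t=\min\{\tfrac12,\gamma/\sqrt{|\{s\le t:y_s^\star\notin\mathcal{Q}\}|}\}$; $a_t=a(\mathbf{W}_t,\mathbf{x}_t)$; $\zeta_t=\mathbb{1}[\gamma_t\le a_t]$; $\mathbf{p}_t'=(1-\zeta_ta_t-(1-\zeta_t)\gamma_t)\mathbf{e}_{y_t^\star}+\zeta_ta_t\frac1K\mathbf{1}+(1-\zeta_t)\frac{\gamma_t}{\rho}\mathbf{1}_S$; predict $y_t'\sim\mathbf{p}_t'$; the importance-weighted loss $v_t\ell_t$ with $v_t=\mathbb{1}[y_t\in\mathrm{out}(y_t')]/P_t(y_t\in\mathrm{out}(y_t'))$ is fed to $\mathcal{A}$, which returns $\mathbf{W}_{t+1}$. Multiclass hinge loss: $m_t(\mathbf{W},y)=\langle\mathbf{W}^y,\mathbf{x}_t\rangle-\max_{k\ne y}\langle\mathbf{W}^k,\mathbf{x}_t\rangle$, $m_t^\star=\max_k m_t(\mathbf{W}_t,k)$ (computed at the current iterate $\mathbf{W}_t$). For $y\in[K]$ define $\ell^{(t)}(\mathbf{W},y)=0$ if $y=y_t^\star$ and $m_t^\star\ge\kappa$, and $\ell^{(t)}(\mathbf{W},y)=\max\{1-m_t(\mathbf{W},y),0\}$ otherwise; $\ell_t(\mathbf{W})=\ell^{(t)}(\mathbf{W},y_t)$. The gradient $\nabla\ell_t$ is with respect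 to $\mathbf{W}$ viewed as a vector in $\mathbb{R}^{Kd}$ (a subgradient where not differentiable), with the Euclidean norm. *)

theory Defs
  imports "HOL-Analysis.Analysis"
begin

text \<open>Labels are the elements of a finite type 'k (so [K] = UNIV, K = CARD('k));
  features live in real^'d; a weight matrix W has rows W $ k :: real^'d, and
  real^'d^'k is the Euclidean space R^{Kd} (norm = Frobenius norm).\<close>

definition score :: "real^'d^'k \<Rightarrow> real^'d \<Rightarrow> 'k \<Rightarrow> real" where
  "score W x k = (W $ k) \<bullet> x"

definition margin :: "real^'d^'k::finite \<Rightarrow> real^'d \<Rightarrow> 'k \<Rightarrow> real" where
  "margin W x y = score W x y - Max {score W x k | k. k \<noteq> y}"

definition mstar :: "real^'d^'k::finite \<Rightarrow> real^'d \<Rightarrow> real" where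
  "mstar W x = Max (range (margin W x))"

text \<open>surrogate loss l^(t)(W,y): Wt is the current iterate, ys the predicted label y_t^*\<close>
definition surr_loss :: "real \<Rightarrow> real^'d^'k::finite \<Rightarrow> real^'d \<Rightarrow> 'k \<Rightarrow> 'k \<Rightarrow> real^'d^'k \<Rightarrow> real" where
  "surr_loss \<kappa> Wt x ys y W =
     (if y = ys \<and> mstar Wt x \<ge> \<kappa> then 0 else max (1 - margin W x y) 0)"

text \<open>feedback graph: out-neighbourhood, with the convention that a node with K-1
  outgoing edges gets the missing edge added\<close>
definition out0 :: "('k \<times> 'k) set \<Rightarrow> 'k \<Rightarrow> 'k set" where
  "out0 E y' = {y. (y', y) \<in> E}"

definition out :: "('k::finite \<times> 'k) set \<Rightarrow> 'k \<Rightarrow> 'k set" where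
  "out E y' = (if card (out0 E y') = CARD('k) - 1 then UNIV else out0 E y')"

definition feedback_graph :: "('k \<times> 'k) set \<Rightarrow> bool" where
  "feedback_graph E \<longleftrightarrow> (\<forall>y. \<exists>y'. (y', y) \<in> E)"

definition Qset :: "('k::finite \<times> 'k) set \<Rightarrow> 'k set" where
  "Qset E = {y'. out E y' = UNIV}"

definition dominating :: "('k::finite \<times> 'k) set \<Rightarrow> 'k set \<Rightarrow> bool" where
  "dominating E S \<longleftrightarrow> (\<forall>y. \<exists>y'\<in>S. y \<in> out E y')"

definition min_dominating :: "('k::finite \<times> 'k) set \<Rightarrow> 'k set \<Rightarrow> bool" where
  "min_dominating E S \<longleftrightarrow> dominating E S \<and> (\<forall>S'. dominating E S' \<longrightarrow> card S \<le> card S')"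

text \<open>Gappletron exploration rate gamma_t (rounds numbered 1,2,...);
  ys s is the argmax label y_s^* of round s\<close>
definition gamma_t :: "real \<Rightarrow> 'k set \<Rightarrow> (nat \<Rightarrow> 'k) \<Rightarrow> nat \<Rightarrow> real" where
  "gamma_t \<gamma> Q ys t =
     (if ys t \<in> Q then 0
      else min (1/2) (\<gamma> / sqrt (real (card {s \<in> {1..t}. ys s \<notin> Q}))))"

text \<open>Gappletron's sampling distribution p_t' given gamma_t, a_t, y_t^* and S\<close>
definition gapp_p :: "real \<Rightarrow> real \<Rightarrow> 'k::finite \<Rightarrow> 'k set \<Rightarrow> 'k \<Rightarrow> real" where
  "gapp_p g a ys S y =
     (let \<zeta> = (if g \<le> a then 1 else 0 :: real) in
        (1 - \<zeta> * a - (1 - \<zeta>) * g) * (if y = ys then 1 else 0)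
        + \<zeta> * a / real CARD('k)
        + (1 - \<zeta>) * g / real (card S) * (if y \<in> S then 1 else 0))"

end

theory Submission
  imports Defs
begin

text \<open>Write \<open>m\<close> for the margin of the predicted label \<open>y\<^sup>\<star>\<close>. Since \<open>y\<^sup>\<star>\<close> maximises the score,
  \<open>m \<ge> 0\<close> and every other label has margin at most \<open>-m\<close>, hence hinge loss at least \<open>1 + m\<close>.
  The mistake bound is a case analysis on whether the true label is \<open>y\<^sup>\<star>\<close> and on which branch
  of \<open>p\<^sub>t'\<close> is active: mixing in the uniform distribution costs the fraction \<open>(K - 1)/K\<close> of
  the loss, mixing in \<open>S\<close> costs at most \<open>\<gamma>\<^sub>t\<close>, and a wrong \<open>y\<^sup>\<star>\<close> with \<open>m \<ge> \<kappa> = 1/2\<close> has loss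
  at least \<open>3/2\<close>, whence the constant \<open>2/3\<close>.
  For the gradient bound, the subgradient inequality at \<open>W + G\<close> gives
  \<open>\<parallel>G\<parallel>\<^sup>2 \<le> \<ell>(W + G) - \<ell>(W) \<le> \<bar>m(W + G, y) - m(W, y)\<bar> \<le> \<parallel>x\<parallel> (\<parallel>G\<^sup>y\<parallel> + \<parallel>G\<^sup>j\<parallel>) \<le> \<surd>2 \<parallel>x\<parallel> \<parallel>G\<parallel>\<close>
  for some runner-up label \<open>j\<close>, so \<open>\<parallel>G\<parallel>\<^sup>2 \<le> 2 \<parallel>x\<parallel>\<^sup>2\<close>, while a loss that is not identically
  zero is at least \<open>1 - \<kappa> = 1/2\<close>.\<close>

lemma exists_other_label:
  fixes y :: "'k::finite"
  assumes "CARD('k) \<ge> 2"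
  obtains j where "j \<noteq> y"
proof -
  have "UNIV \<noteq> {y}"
  proof
    assume "UNIV = {y}"
    then have "CARD('k) = card {y}"
      by (rule arg_cong)
    with assms show False
      by simp
  qed
  then show thesis
    using that by blast
qed

lemma Max_others_ge:
  fixes f :: "'k::finite \<Rightarrow> 'a::linorder"
  assumes "k \<noteq> y"
  shows "f k \<le> Max {f k | k. k \<noteq> y}"
  using assms by (intro Max_ge) auto

lemma Max_others_attained:
  fixes f :: "'k::finite \<Rightarrow> 'a::linorder"
  assumes "CARD('k) \<ge> 2"
  obtains j where "j \<noteq> y" and "Max {f k | k. k \<noteq> y} = f j"
proof -
  obtain i :: 'k where "i \<noteq> y" using exists_other_label[OF assms] .
  then have "Max {f k | k. k \<noteq> y} \<in> {f k | k. k \<noteq> y}"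
    by (intro Max_in) auto
  then show thesis using that by blast
qed

lemma Max_others_diff_le:
  fixes f g :: "'k::finite \<Rightarrow> real"
  assumes "CARD('k) \<ge> 2"
  obtains j where "j \<noteq> y" and "\<bar>Max {f k | k. k \<noteq> y} - Max {g k | k. k \<noteq> y}\<bar> \<le> \<bar>f j - g j\<bar>"
proof -
  obtain jf where jf: "jf \<noteq> y" "Max {f k | k. k \<noteq> y} = f jf"
    using Max_others_attained[OF assms] .
  obtain jg where jg: "jg \<noteq> y" "Max {g k | k. k \<noteq> y} = g jg"
    using Max_others_attained[OF assms] .
  have "g jf \<le> Max {g k | k. k \<noteq> y}" "f jg \<le> Max {f k | k. k \<noteq> y}"
    using Max_others_ge[OF jf(1)] Max_others_ge[OF jg(1)] .
  show thesis
  proof (cases "Max {f k | k. k \<noteq> y} \<ge> Max {g k | k. k \<noteq> y}")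
    case True
    show thesis
      by (rule that[OF jf(1)]) (use True jf(2) \<open>g jf \<le> _\<close> in linarith)
  next
    case False
    show thesis
      by (rule that[OF jg(1)]) (use False jg(2) \<open>f jg \<le> _\<close> in linarith)
  qed
qed

lemma margin_argmax_nonneg:
  assumes "CARD('k::finite) \<ge> 2" and "\<forall>k. score (W::real^'d^'k) x k \<le> score W x ys"
  shows "margin W x ys \<ge> 0"
proof -
  obtain j where "Max {score W x k | k. k \<noteq> ys} = score W x j"
    using Max_others_attained[OF assms(1)] .
  moreover have "score W x j \<le> score W x ys"
    using assms(2) by blast
  ultimately show ?thesis
    unfolding margin_def by linarith
qed

lemma margin_le_neg_margin_argmax:
  assumes "\<forall>k. score (W::real^'d^'k::finite) x k \<le> score W x ys" and "y \<noteq> ys"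
  shows "margin W x y \<le> - margin W x ys"
proof -
  have "score W x ys \<le> Max {score W x k | k. k \<noteq> y}"
    "score W x y \<le> Max {score W x k | k. k \<noteq> ys}"
    using Max_others_ge[OF assms(2)[symmetric]] Max_others_ge[OF assms(2)] .
  then show ?thesis
    unfolding margin_def by linarith
qed

lemma mstar_eq_margin_argmax:
  assumes "CARD('k::finite) \<ge> 2" and "\<forall>k. score (W::real^'d^'k) x k \<le> score W x ys"
  shows "mstar W x = margin W x ys"
  unfolding mstar_def
proof (rule Max_eqI)
  fix z assume "z \<in> range (margin W x)"
  then obtain k where z: "z = margin W x k"
    by blast
  show "z \<le> margin W x ys"
  proof (cases "k = ys")
    case False
    then show ?thesis
      using z margin_le_neg_margin_argmax[OF assms(2) False] margin_argmax_nonneg[OF assms] by linarith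
  qed (simp add: z)
qed auto

lemma margin_diff_le:
  fixes V W :: "real^'d^'k::finite"
  assumes "CARD('k) \<ge> 2"
  obtains j where "j \<noteq> y"
    and "\<bar>margin V x y - margin W x y\<bar> \<le> norm x * (norm ((V - W) $ y) + norm ((V - W) $ j))"
proof -
  obtain j where j: "j \<noteq> y"
    "\<bar>Max {score V x k | k. k \<noteq> y} - Max {score W x k | k. k \<noteq> y}\<bar> \<le> \<bar>score V x j - score W x j\<bar>"
    using Max_others_diff_le[OF assms] .
  have score_diff: "\<bar>score V x k - score W x k\<bar> \<le> norm x * norm ((V - W) $ k)" for k
    using Cauchy_Schwarz_ineq2[of "(V - W) $ k" x]
    by (simp add: score_def inner_diff_left mult.commute)
  show thesis
  proof (rule that[OF j(1)])
    show "\<bar>margin V x y - margin W x y\<bar> \<le> norm x * (norm ((V - W) $ y) + norm ((V - W) $ j))"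
      using j(2) score_diff[of y] score_diff[of j] unfolding margin_def distrib_left by linarith
  qed
qed

lemma sum_sq_le_twice_sum_sq: "((a::real) + b)\<^sup>2 \<le> 2 * (a\<^sup>2 + b\<^sup>2)"
proof -
  have "0 \<le> (a - b)\<^sup>2"
    by simp
  then show ?thesis
    by (simp add: power2_eq_square algebra_simps)
qed

lemma norm_add_two_rows_le:
  fixes G :: "real^'d^'k::finite"
  assumes "j \<noteq> y"
  shows "norm (G $ y) + norm (G $ j) \<le> sqrt 2 * norm G"
proof -
  have "(norm (G $ y))\<^sup>2 + (norm (G $ j))\<^sup>2 = (\<Sum>i\<in>{y, j}. (norm (G $ i))\<^sup>2)"
    using assms by simp
  also have "\<dots> \<le> (\<Sum>i\<in>UNIV. (norm (G $ i))\<^sup>2)"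
    by (rule sum_mono2) auto
  also have "\<dots> = (norm G)\<^sup>2"
    by (simp add: power2_norm_eq_inner inner_vec_def)
  finally have "2 * ((norm (G $ y))\<^sup>2 + (norm (G $ j))\<^sup>2) \<le> 2 * (norm G)\<^sup>2"
    by simp
  with sum_sq_le_twice_sum_sq have "(norm (G $ y) + norm (G $ j))\<^sup>2 \<le> 2 * (norm G)\<^sup>2"
    by (rule order_trans)
  then have "norm (G $ y) + norm (G $ j) \<le> sqrt (2 * (norm G)\<^sup>2)"
    by (rule real_le_rsqrt)
  then show ?thesis
    by (simp add: real_sqrt_mult)
qed

lemma hinge_subgradient_norm_le:
  fixes W G :: "real^'d^'k::finite"
  assumes "CARD('k) \<ge> 2"
    and subgrad: "\<forall>V. max (1 - margin V x y) 0 \<ge> max (1 - margin W x y) 0 + G \<bullet> (V - W)"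
  shows "(norm G)\<^sup>2 \<le> 2 * (norm x)\<^sup>2"
proof -
  obtain j where "j \<noteq> y"
    and margin_moves: "\<bar>margin (W + G) x y - margin W x y\<bar> \<le> norm x * (norm (G $ y) + norm (G $ j))"
    using margin_diff_le[OF assms(1), where V = "W + G" and W = W and x = x and y = y] by auto
  have "(norm G)\<^sup>2 \<le> max (1 - margin (W + G) x y) 0 - max (1 - margin W x y) 0"
    using subgrad[rule_format, of "W + G"] by (simp add: power2_norm_eq_inner)
  also have "\<dots> \<le> \<bar>margin (W + G) x y - margin W x y\<bar>"
    by linarith
  also have "\<dots> \<le> norm x * (sqrt 2 * norm G)"
    using margin_moves mult_left_mono[OF norm_add_two_rows_le[OF \<open>j \<noteq> y\<close>] norm_ge_zero]
    by (rule order_trans)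
  finally have "norm G * norm G \<le> norm G * (sqrt 2 * norm x)"
    by (simp add: power2_eq_square mult_ac)
  then have "norm G \<le> sqrt 2 * norm x"
    by (cases "norm G = 0") auto
  then have "(norm G)\<^sup>2 \<le> (sqrt 2 * norm x)\<^sup>2"
    by (simp add: power_mono)
  then show ?thesis
    by (simp add: power_mult_distrib)
qed

lemma surr_loss_argmax:
  assumes "CARD('k::finite) \<ge> 2" and "\<forall>k. score (W::real^'d^'k) x k \<le> score W x ys"
  shows "surr_loss \<kappa> W x ys ys W = (if margin W x ys \<ge> \<kappa> then 0 else max (1 - margin W x ys) 0)"
  using mstar_eq_margin_argmax[OF assms] by (simp add: surr_loss_def)

lemma surr_loss_ge_one_plus_margin:
  assumes "\<forall>k. score (W::real^'d^'k::finite) x k \<le> score W x ys" and "y \<noteq> ys"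
  shows "surr_loss \<kappa> W x ys y W \<ge> 1 + margin W x ys"
  using margin_le_neg_margin_argmax[OF assms] assms(2) by (simp add: surr_loss_def)

lemma surr_loss_ge_one_minus_kappa:
  assumes "CARD('k::finite) \<ge> 2" and "\<forall>k. score (W::real^'d^'k) x k \<le> score W x ys"
    and "0 \<le> \<kappa>" and "\<not> (y = ys \<and> mstar W x \<ge> \<kappa>)"
  shows "surr_loss \<kappa> W x ys y W \<ge> 1 - \<kappa>"
proof (cases "y = ys")
  case True
  then show ?thesis
    using assms(4) mstar_eq_margin_argmax[OF assms(1,2)] by (simp add: surr_loss_def)
next
  case False
  then show ?thesis
    using surr_loss_ge_one_plus_margin[OF assms(2) False, of \<kappa>] margin_argmax_nonneg[OF assms(1,2)] assms(3)
    by linarith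
qed

lemma surr_loss_subgradient_norm_le:
  fixes W G :: "real^'d^'k::finite"
  assumes "CARD('k) \<ge> 2" and "\<forall>k. score W x k \<le> score W x ys" and "0 \<le> \<kappa>"
    and subgrad: "\<forall>V. surr_loss \<kappa> W x ys y V \<ge> surr_loss \<kappa> W x ys y W + G \<bullet> (V - W)"
  shows "(1 - \<kappa>) * (norm G)\<^sup>2 \<le> 2 * (norm x)\<^sup>2 * surr_loss \<kappa> W x ys y W"
proof (cases "y = ys \<and> mstar W x \<ge> \<kappa>")
  case True
  then have "G \<bullet> G \<le> 0"
    using subgrad[rule_format, of "W + G"] by (simp add: surr_loss_def)
  then have "G = 0"
    using inner_ge_zero[of G] by simp
  then show ?thesis
    by (simp add: surr_loss_def)
next
  case False
  then have hinge: "surr_loss \<kappa> W x ys y V = max (1 - margin V x y) 0" for V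
    unfolding surr_loss_def by (rule if_not_P)
  have "\<forall>V. max (1 - margin V x y) 0 \<ge> max (1 - margin W x y) 0 + G \<bullet> (V - W)"
    using subgrad unfolding hinge .
  then have "(norm G)\<^sup>2 \<le> 2 * (norm x)\<^sup>2"
    by (rule hinge_subgradient_norm_le[OF assms(1)])
  moreover have "1 - \<kappa> \<le> surr_loss \<kappa> W x ys y W"
    using surr_loss_ge_one_minus_kappa[OF assms(1-3) False] .
  moreover have "0 \<le> surr_loss \<kappa> W x ys y W"
    by (simp add: surr_loss_def)
  ultimately have "(1 - \<kappa>) * (norm G)\<^sup>2 \<le> surr_loss \<kappa> W x ys y W * (2 * (norm x)\<^sup>2)"
    by (intro mult_mono) simp_all
  then show ?thesis
    by (simp add: mult_ac)
qed

lemma gapp_p_exploit: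
  "g \<le> a \<Longrightarrow> gapp_p g a ys S y = (1 - a) * (if y = ys then 1 else 0) + a / real CARD('k)"
  for ys :: "'k::finite"
  by (simp add: gapp_p_def)

lemma gapp_p_explore:
  "\<not> g \<le> a \<Longrightarrow>
    gapp_p g a ys S y = (1 - g) * (if y = ys then 1 else 0) + g / real (card S) * (if y \<in> S then 1 else 0)"
  for ys :: "'k::finite"
  by (simp add: gapp_p_def)

lemma gapp_p_nonneg:
  fixes ys :: "'k::finite"
  assumes "0 \<le> g" "g \<le> 1" "0 \<le> a" "a \<le> 1"
  shows "0 \<le> gapp_p g a ys S y"
  using assms by (cases "g \<le> a") (simp_all add: gapp_p_exploit gapp_p_explore)

lemma sum_gapp_p:
  fixes ys :: "'k::finite"
  assumes "S \<noteq> {}"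
  shows "(\<Sum>y\<in>UNIV. gapp_p g a ys S y) = 1"
proof (cases "g \<le> a")
  case True
  then have "(\<Sum>y\<in>UNIV. gapp_p g a ys S y)
      = (\<Sum>y\<in>UNIV. (1 - a) * (if y = ys then 1 else 0) + a / real CARD('k))"
    by (intro sum.cong) (simp_all add: gapp_p_exploit)
  then show ?thesis
    by (simp add: sum.distrib sum_distrib_left[symmetric])
next
  case False
  then have "(\<Sum>y\<in>UNIV. gapp_p g a ys S y)
      = (\<Sum>y\<in>UNIV. (1 - g) * (if y = ys then 1 else 0) + g / real (card S) * (if y \<in> S then 1 else 0))"
    by (intro sum.cong) (simp_all add: gapp_p_explore)
  moreover have "card S \<noteq> 0"
    using assms by simp
  ultimately show ?thesis
    by (simp add: sum.distrib sum_distrib_left[symmetric] sum_divide_distrib[symmetric] sum.If_cases)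
qed

lemma sum_gapp_p_mistakes:
  fixes ys :: "'k::finite"
  assumes "S \<noteq> {}"
  shows "(\<Sum>yy\<in>UNIV. gapp_p g a ys S yy * (if yy \<noteq> y then 1 else 0)) = 1 - gapp_p g a ys S y"
proof -
  have "(\<Sum>yy\<in>UNIV. gapp_p g a ys S yy * (if yy \<noteq> y then 1 else 0))
      = (\<Sum>yy\<in>UNIV. gapp_p g a ys S yy - (if yy = y then gapp_p g a ys S yy else 0))"
    by (intro sum.cong) auto
  also have "\<dots> = 1 - gapp_p g a ys S y"
    using sum_gapp_p[OF assms] by (simp add: sum_subtractf)
  finally show ?thesis .
qed

lemma gappletron_mistake_prob_le:
  fixes W :: "real^'d^'k::finite"
  assumes K2: "CARD('k) \<ge> 2" and argmax: "\<forall>k. score W x k \<le> score W x ys"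
    and g: "0 \<le> g" "g \<le> 1/2" and "S \<noteq> {}"
  shows "(\<Sum>yy\<in>UNIV. gapp_p g (surr_loss (1/2) W x ys ys W) ys S yy * (if yy \<noteq> y then 1 else 0))
    \<le> max (2/3) (real (CARD('k) - 1) / real CARD('k)) * surr_loss (1/2) W x ys y W + g"
proof -
  define m where "m = margin W x ys"
  define a where "a = surr_loss (1/2) W x ys ys W"
  define l where "l = surr_loss (1/2) W x ys y W"
  define K where "K = real CARD('k)"
  define c where "c = max (2/3) ((K - 1) / K)"
  have "K \<ge> 2"
    using K2 by (simp add: K_def)
  have "m \<ge> 0"
    unfolding m_def by (rule margin_argmax_nonneg[OF K2 argmax])
  then have a_eq: "a = (if m \<ge> 1/2 then 0 else 1 - m)"
    unfolding a_def m_def surr_loss_argmax[OF K2 argmax] by simp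
  have "0 \<le> a"
    using a_eq by simp
  have c_ge: "2/3 \<le> c" "(K - 1) / K \<le> c"
    unfolding c_def by simp_all
  have "1 - gapp_p g a ys S y \<le> c * l + g"
  proof (cases "y = ys")
    case True
    then have "l = a"
      unfolding l_def a_def by simp
    show ?thesis
    proof (cases "g \<le> a")
      case True
      then have "1 - gapp_p g a ys S y = a * ((K - 1) / K)"
        using \<open>y = ys\<close> \<open>K \<ge> 2\<close> by (simp add: gapp_p_exploit K_def field_simps)
      also have "\<dots> \<le> a * c"
        using c_ge(2) \<open>0 \<le> a\<close> by (rule mult_left_mono)
      also have "\<dots> = c * l"
        using \<open>l = a\<close> by simp
      finally show ?thesis
        using g by simp
    next
      case False
      then have "1 - gapp_p g a ys S y \<le> g"
        using \<open>y = ys\<close> g by (simp add: gapp_p_explore)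
      moreover have "0 \<le> c * l"
        using c_ge(1) by (simp add: l_def surr_loss_def)
      ultimately show ?thesis
        by simp
    qed
  next
    case False
    then have "1 + m \<le> l"
      unfolding l_def m_def by (rule surr_loss_ge_one_plus_margin[OF argmax])
    show ?thesis
    proof (cases "m \<ge> 1/2")
      case True
      have "1 \<le> 2/3 * l"
        using True \<open>1 + m \<le> l\<close> by simp
      also have "\<dots> \<le> c * l"
        using c_ge(1) \<open>1 + m \<le> l\<close> \<open>m \<ge> 0\<close> by (simp add: mult_right_mono)
      finally have "1 \<le> c * l" .
      moreover have "0 \<le> gapp_p g a ys S y"
        using g a_eq True by (intro gapp_p_nonneg) simp_all
      ultimately show ?thesis
        using g by simp
    next
      case False
      then have "a = 1 - m" "g \<le> a"
        using a_eq g by simp_all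
      then have "1 - gapp_p g a ys S y = 1 - (1 - m) / K"
        using \<open>y \<noteq> ys\<close> by (simp add: gapp_p_exploit K_def)
      also have "\<dots> = (K - 1) / K * (1 + m) - (K - 2) * m / K"
        using \<open>K \<ge> 2\<close> by (simp add: field_simps)
      also have "\<dots> \<le> (K - 1) / K * (1 + m)"
        using \<open>K \<ge> 2\<close> \<open>m \<ge> 0\<close> by simp
      also have "\<dots> \<le> c * l"
        using c_ge \<open>1 + m \<le> l\<close> \<open>m \<ge> 0\<close> by (intro mult_mono) simp_all
      finally show ?thesis
        using g by simp
    qed
  qed
  moreover have "c = max (2/3) (real (CARD('k) - 1) / real CARD('k))"
    using K2 by (simp add: c_def K_def of_nat_diff)
  ultimately show ?thesis
    using sum_gapp_p_mistakes[OF \<open>S \<noteq> {}\<close>] by (simp add: a_def l_def)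
qed

lemma gamma_t_nonneg: "0 \<le> \<gamma> \<Longrightarrow> 0 \<le> gamma_t \<gamma> Q ys t"
  by (simp add: gamma_t_def)

lemma gamma_t_le_half: "gamma_t \<gamma> Q ys t \<le> 1/2"
  by (simp add: gamma_t_def min_def)

lemma dominating_nonempty: "dominating E S \<Longrightarrow> S \<noteq> {}"
  by (auto simp: dominating_def)

theorem lemma3:
  fixes W :: "nat \<Rightarrow> real^'d^'k::finite"
    and x :: "nat \<Rightarrow> real^'d"
    and y :: "nat \<Rightarrow> 'k"
    and ys :: "nat \<Rightarrow> 'k"
    and E :: "('k \<times> 'k) set"
    and S :: "'k set"
    and \<gamma> :: real
    and t :: nat
  assumes K2: "CARD('k) \<ge> 2"
    and graph: "feedback_graph E"
    and S: "min_dominating E S"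
    and gam: "\<gamma> \<ge> 0"
    and argmax: "\<And>s. \<forall>k. score (W s) (x s) k \<le> score (W s) (x s) (ys s)"
    and t1: "t \<ge> 1"
  shows "(\<Sum>yy\<in>UNIV.
            gapp_p (gamma_t \<gamma> (Qset E) ys t)
                   (surr_loss (1/2) (W t) (x t) (ys t) (ys t) (W t))
                   (ys t) S yy * (if yy \<noteq> y t then 1 else 0))
         \<le> max (2/3) (real (CARD('k) - 1) / real CARD('k))
             * surr_loss (1/2) (W t) (x t) (ys t) (y t) (W t)
           + gamma_t \<gamma> (Qset E) ys t
         \<and> (\<forall>G. (\<forall>V. surr_loss (1/2) (W t) (x t) (ys t) (y t) V
                  \<ge> surr_loss (1/2) (W t) (x t) (ys t) (y t) (W t) + G \<bullet> (V - W t))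
         \<longrightarrow> (norm G)\<^sup>2 \<le> 4 * (norm (x t))\<^sup>2 * surr_loss (1/2) (W t) (x t) (ys t) (y t) (W t))"
proof -
  have "S \<noteq> {}"
    using S dominating_nonempty by (auto simp: min_dominating_def)
  then show ?thesis
    using gappletron_mistake_prob_le[OF K2 argmax gamma_t_nonneg[OF gam] gamma_t_le_half]
      surr_loss_subgradient_norm_le[OF K2 argmax, where \<kappa> = "1/2"]
    by (simp add: mult.assoc)
qed

end
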